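(* Let $R$ be a principal Artinian ring, let $f, g \in R[x]$ with $g$ of positive degree and invertible leading coefficient, let $c = c(f)$ be a generator of the content ideal of $f$, and let $h \in R[x]$ satisfy $f = c\cdot h$. Put $\bar R = R/\mathrm{Ann}(c)$ and let $\bar h, \bar g$ be the images of $h, g$ in $\bar R[x]$. Then $$\mathrm{Rres}_R(f,g) = \{\, c s : s \in R,\ (s \bmod \mathrm{Ann}(c)) \in \mathrm{Rres}_{\bar R}(\bar h, \bar g)\,\},$$ i.e. $\mathrm{rres}_R(f,g) = c\cdot \mathrm{rres}_{R/\mathrm{Ann}(c)}(h,g)$.
   Context: A principal Artinian ring is a commutative ring with identity in which every ideal is principal and which satisfies the descending chain condition on ideals. For $f = \sum a_i x^i$, the content ideal is $C(f) = (a_0,\dots,a_d)$ and $c(f)$ is any generator of it. $\mathrm{Ann}(c) = \{s \in R : sc = 0\}$. For a commutative ring $S$ and $f,g\in S[x]$, $\mathrm{Rres}_S(f,g) = (f,g)\cap S$, where $(f,g)$ is the ideal of $S[x]$ generated by $f,g$; $\mathrm{rres}_S(f,g)$ denotes a generator of it (for a quotient ring, a lift of a generator to $R$). *)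

theory Defs
  imports "HOL-Computational_Algebra.Polynomial"
begin

definition is_ideal :: "'a::comm_ring_1 set \<Rightarrow> bool" where
  "is_ideal I \<longleftrightarrow> 0 \<in> I \<and> (\<forall>x\<in>I. \<forall>y\<in>I. x + y \<in> I) \<and> (\<forall>x\<in>I. \<forall>r. r * x \<in> I)"

definition ideal_gen :: "'a::comm_ring_1 set \<Rightarrow> 'a set" where
  "ideal_gen S = \<Inter>{I. is_ideal I \<and> S \<subseteq> I}"

definition principal_ring :: "'a::comm_ring_1 itself \<Rightarrow> bool" where
  "principal_ring _ \<longleftrightarrow> (\<forall>I::'a set. is_ideal I \<longrightarrow> (\<exists>a. I = ideal_gen {a}))"

definition artinian_ring :: "'a::comm_ring_1 itself \<Rightarrow> bool" where
  "artinian_ring _ \<longleftrightarrow> \<not> (\<exists>F :: nat \<Rightarrow> 'a set. \<forall>n. is_ideal (F n) \<and> F (Suc n) \<subset> F n)"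

definition principal_artinian_ring :: "'a::comm_ring_1 itself \<Rightarrow> bool" where
  "principal_artinian_ring T \<longleftrightarrow> principal_ring T \<and> artinian_ring T"

definition content_ideal :: "'a::comm_ring_1 poly \<Rightarrow> 'a set" where
  "content_ideal f = ideal_gen {coeff f i | i. i \<le> degree f}"

definition Ann :: "'a::comm_ring_1 \<Rightarrow> 'a set" where
  "Ann c = {s. s * c = 0}"

text \<open>Rres_R(f,g) = (f,g) \<inter> R, with R identified with the constant polynomials.\<close>
definition Rres :: "'a::comm_ring_1 poly \<Rightarrow> 'a poly \<Rightarrow> 'a set" where
  "Rres f g = {s. \<exists>u v. u * f + v * g = [:s:]}"

text \<open>For an ideal I of R: the set of s \<in> R whose residue s mod I lies in
  Rres_{R/I}(f mod I, g mod I).  Since every polynomial over R/I lifts to R[x],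
  this means: there are u, v \<in> R[x] with u f + v g \<equiv> s coefficientwise mod I.\<close>
definition Rres_mod :: "'a::comm_ring_1 set \<Rightarrow> 'a poly \<Rightarrow> 'a poly \<Rightarrow> 'a set" where
  "Rres_mod I f g = {s. \<exists>u v. \<forall>i. coeff (u * f + v * g - [:s:]) i \<in> I}"

end

theory Submission
  imports Defs
begin

text \<open>Only the unit leading coefficient of \<open>g\<close> matters: if \<open>u f + v g = t\<close> with
  \<open>f = c h\<close>, then every coefficient of \<open>v g\<close> of degree at least \<open>deg g > 0\<close> is a multiple
  of \<open>c\<close>, and reading these coefficients from the top down forces every coefficient of
  \<open>v\<close> to be a multiple of \<open>c\<close>.  Thus \<open>v = c w\<close> and \<open>t = c (u h + w g)\<close>, so \<open>t\<close> is \<open>c\<close> times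
  a constant that is congruent to \<open>u h + w g\<close> modulo \<open>Ann c\<close>; the converse is immediate.\<close>

lemma coeff_mult_degree_shift:
  fixes v g :: "'a::comm_semiring_1 poly"
  shows "coeff (v * g) (k + degree g) =
    coeff v k * lead_coeff g + (\<Sum>i\<in>{k<..k + degree g}. coeff v i * coeff g (k + degree g - i))"
proof -
  let ?m = "k + degree g" and ?t = "\<lambda>i. coeff v i * coeff g (k + degree g - i)"
  have low: "?t i = 0" if "i < k" for i
    using that by (simp add: coeff_eq_0)
  have "coeff (v * g) ?m = sum ?t ({..k} \<union> {k<..?m})"
    by (simp add: coeff_mult ivl_disj_un_one(3))
  also have "\<dots> = sum ?t {..k} + sum ?t {k<..?m}"
    by (rule sum.union_disjoint) auto
  also have "sum ?t {..k} = sum ?t {..<k} + ?t k"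
    by (simp add: lessThan_Suc_atMost[symmetric])
  also have "sum ?t {..<k} = 0"
    by (simp add: low)
  finally show ?thesis by simp
qed

lemma dvd_coeffs_of_dvd_high_coeffs_mult:
  fixes v g :: "'a::comm_ring_1 poly"
  assumes lc: "lead_coeff g dvd 1"
    and high: "\<And>i. degree g \<le> i \<Longrightarrow> c dvd coeff (v * g) i"
  shows "c dvd coeff v k"
proof (induction "degree v - k" arbitrary: k rule: less_induct)
  case less
  show ?case
  proof (cases "k \<le> degree v")
    case False
    then show ?thesis by (simp add: coeff_eq_0)
  next
    case True
    have above: "c dvd coeff v i" if "k < i" for i
      using less that True by (cases "i \<le> degree v") (simp_all add: coeff_eq_0)
    have "c dvd (\<Sum>i\<in>{k<..k + degree g}. coeff v i * coeff g (k + degree g - i))"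
      by (rule dvd_sum) (simp add: above)
    moreover have "c dvd coeff (v * g) (k + degree g)"
      by (rule high) simp
    ultimately have "c dvd coeff v k * lead_coeff g"
      unfolding coeff_mult_degree_shift by (simp add: dvd_add_left_iff)
    moreover obtain e where "1 = lead_coeff g * e"
      using lc by (erule dvdE)
    then have "coeff v k = coeff v k * lead_coeff g * e"
      by (simp add: mult.assoc)
    ultimately show ?thesis
      by (metis dvd_mult2)
  qed
qed

lemma smult_of_dvd_coeffs:
  fixes v :: "'a::comm_ring_1 poly"
  assumes "\<And>i. c dvd coeff v i"
  obtains w where "v = smult c w"
proof -
  have "\<forall>i. \<exists>w. coeff v i = c * w"
    using assms by (auto simp: dvd_def)
  then obtain q where q: "\<And>i. coeff v i = c * q i"
    by metis
  have "coeff v i = coeff (smult c (Poly (map q [0..<Suc (degree v)]))) i" for i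
  proof (cases "i \<le> degree v")
    case True
    then show ?thesis by (simp add: q nth_default_def del: upt_Suc)
  next
    case False
    then show ?thesis by (simp add: coeff_eq_0 nth_default_def)
  qed
  then show ?thesis
    using that poly_eqI by blast
qed

lemma smult_eq_0_iff_coeffs_Ann:
  "smult c p = 0 \<longleftrightarrow> (\<forall>i. coeff p i \<in> Ann c)"
  by (auto simp: Ann_def mult.commute poly_eq_iff)

lemma mem_Rres_mod_Ann_iff:
  fixes h g :: "'a::comm_ring_1 poly"
  shows "s \<in> Rres_mod (Ann c) h g \<longleftrightarrow> (\<exists>u v. smult c (u * h + v * g) = [:c * s:])"
proof -
  have "smult c (u * h + v * g - [:s:]) = 0 \<longleftrightarrow> smult c (u * h + v * g) = [:c * s:]" for u v
    by (simp add: smult_diff_right)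
  then show ?thesis
    unfolding Rres_mod_def mem_Collect_eq smult_eq_0_iff_coeffs_Ann[symmetric] by presburger
qed

lemma Rres_smult_cofactor:
  fixes h g :: "'a::comm_ring_1 poly"
  assumes "degree g > 0" and "lead_coeff g dvd 1"
    and "t \<in> Rres (smult c h) g"
  obtains u w where "smult c (u * h + w * g) = [:t:]"
proof -
  obtain u v where uv: "u * smult c h + v * g = [:t:]"
    using assms(3) by (auto simp: Rres_def)
  have vg: "v * g = [:t:] - smult c (u * h)"
    using uv by (simp add: algebra_simps)
  have "c dvd coeff (v * g) i" if "degree g \<le> i" for i
    using that assms(1) by (simp add: vg coeff_pCons split: nat.split)
  then have "c dvd coeff v i" for i
    by (rule dvd_coeffs_of_dvd_high_coeffs_mult[OF assms(2)])
  then obtain w where "v = smult c w"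
    by (rule smult_of_dvd_coeffs)
  then have "smult c (u * h + w * g) = [:t:]"
    using uv by (simp add: algebra_simps smult_add_right)
  then show ?thesis by (rule that)
qed

theorem lemma5p2:
  fixes f g h :: "'a::comm_ring_1 poly" and c :: 'a
  assumes "principal_artinian_ring TYPE('a)"
    and "degree g > 0"
    and "lead_coeff g dvd 1"
    and "ideal_gen {c} = content_ideal f"
    and "f = smult c h"
  shows "Rres f g = {c * s | s. s \<in> Rres_mod (Ann c) h g}"
proof (intro set_eqI iffI)
  fix t assume "t \<in> Rres f g"
  then obtain u w where E: "smult c (u * h + w * g) = [:t:]"
    using Rres_smult_cofactor[OF assms(2,3)] assms(5) by blast
  define s where "s = coeff (u * h + w * g) 0"
  have "t = c * s"
    using arg_cong[OF E, of "\<lambda>p. coeff p 0"] by (simp add: s_def)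
  with E show "t \<in> {c * s | s. s \<in> Rres_mod (Ann c) h g}"
    by (auto simp: mem_Rres_mod_Ann_iff)
next
  fix t assume "t \<in> {c * s | s. s \<in> Rres_mod (Ann c) h g}"
  then obtain u v where "smult c (u * h + v * g) = [:t:]"
    by (auto simp: mem_Rres_mod_Ann_iff)
  then have "u * f + smult c v * g = [:t:]"
    using assms(5) by (simp add: algebra_simps smult_add_right)
  then show "t \<in> Rres f g"
    unfolding Rres_def by blast
qed

end
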